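(* Let $P$ be a positive event pattern, $I$ an event stream, $G=(V,\mathcal{E})$ the GRETA graph of $P$ and $I$, $E$ an event type, and suppose every event of type $E$ carries a real-valued attribute $attr$. For $e \in V$ let $Pr(e)=\{p\in V:(p,e)\in\mathcal{E}\}$, let $End=\{e \in V : e.type = end(P)\}$, and let $e.count$ be defined recursively in increasing time order by $e.count = [e.type=start(P)] + \sum_{p\in Pr(e)} p.count$. Define recursively in increasing time order, for $e \in V$: if $e.type = E$: $e.count_E = e.count + \sum_{p\in Pr(e)} p.count_E$, $e.min = \min(\{e.attr\}\cup\{p.min : p\in Pr(e)\})$, $e.max = \max(\{e.attr\}\cup\{p.max : p\in Pr(e)\})$, $e.sum = e.attr\cdot e.count + \sum_{p\in Pr(e)} p.sum$; if $e.type \neq E$: $e.count_E = \sum_{p\in Pr(e)} p.count_E$, $e.min = \min_{p\in Pr(e)} p.min$, $e.max = \max_{p\in Pr(e)} p.max$, $e.sum = \sum_{p\in Pr(e)} p.sum$ (with $\min\emptyset = +\infty$, $\max\emptyset=-\infty$, empty sums $=0$). Then $\mathsf{COUNT}(E) = \sum_{e\in End} e.count_E$, $\mathsf{MIN}(E.attr) = \min_{e\in End} e.min$, $\mathsf{MAX}(E.attr) = \max_{e\in End} e.max$, $\mathsf{SUM}(E.attr) = \sum_{e\in End} e.sum$, and $\mathsf{AVG}(E.attr) = \mathsf{SUM}(E.attr)/\mathsf{COUNT}(E)$.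
   Context: Events: each event $e$ has an event type $e.type$ and an occurrence time $e.time \in \mathbb{Q}_{\ge 0}$. An event stream $I$ is a finite collection of distinct events arriving in nondecreasing order of time. Positive patterns: an event type $E$ is a pattern; if $P_i,P_j$ are patterns then $P_i+$ and $\mathsf{SEQ}(P_i,P_j)$ are patterns; each event type occurs at most once in a pattern. Matches over $I$: $matches(E)=\{(e): e\in I, e.type=E\}$; $(e_1,\dots,e_k)\in matches(\mathsf{SEQ}(P_i,P_j))$ iff for some $1\le m\le k$, $(e_1,\dots,e_m)\in matches(P_i)$, $(e_{m+1},\dots,e_k)\in matches(P_j)$ and $e_1.time<\dots<e_k.time$; $matches(P_i+)$ consists of concatenations $s_1\cdots s_k$ ($k\ge1$) with each $s_l\in matches(P_i)$ and the last event of $s_l$ strictly earlier than the first event of $s_{l+1}$. Trends matched by $P$ in $I$ are the elements of $matches(P)$. Define $start(E)=end(E)=E$, $start(P_i+)=start(P_i)$, $end(P_i+)=end(P_i)$, $start(\mathsf{SEQ}(P_i,P_j))=start(P_i)$, $end(\mathsf{SEQ}(P_i,P_j))=end(P_j)$. The GRETA graph $G=(V,\mathcal{E})$ has as vertices the events of $I$ occurring in at least one trend matched by $P$ in $I$, and an edge $(e_i,e_j)$ iff $e_i,e_j$ are consecutive events, in this order, in some trend matched by $P$ in $I$. Aggregates over all trends matched by $P$ in $I$: $\mathsf{COUNT}(E)$ is the total number of occurrences of events of type $E$ in all trends (summed over trends); $\mathsf{MIN}(E.attr)$ ($\mathsf{MAX}(E.attr)$) is the minimum (maximum) of $attr$ over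 all events of type $E$ in all trends; $\mathsf{SUM}(E.attr)$ is the sum, over all trends and all events of type $E$ in each trend, of $attr$; $\mathsf{AVG}(E.attr)=\mathsf{SUM}(E.attr)/\mathsf{COUNT}(E)$. *)

theory Defs
  imports Complex_Main "HOL-Library.Extended_Real"
begin

(* Events are elements of an abstract type 'e, with an event type ety :: 'e => 't
   and an occurrence time tm :: 'e => rat.  An event stream is a finite set of events. *)

datatype 't pat = Ev 't | Plus "'t pat" | SEQ "'t pat" "'t pat"

fun pat_types :: "'t pat \<Rightarrow> 't list" where
  "pat_types (Ev E) = [E]"
| "pat_types (Plus P) = pat_types P"
| "pat_types (SEQ P Q) = pat_types P @ pat_types Q"

definition wf_pat :: "'t pat \<Rightarrow> bool" where
  "wf_pat P \<longleftrightarrow> distinct (pat_types P)"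

fun pstart :: "'t pat \<Rightarrow> 't" where
  "pstart (Ev E) = E"
| "pstart (Plus P) = pstart P"
| "pstart (SEQ P Q) = pstart P"

fun pend :: "'t pat \<Rightarrow> 't" where
  "pend (Ev E) = E"
| "pend (Plus P) = pend P"
| "pend (SEQ P Q) = pend Q"

inductive_set plus_matches :: "('e \<Rightarrow> rat) \<Rightarrow> 'e list set \<Rightarrow> 'e list set"
  for tm :: "'e \<Rightarrow> rat" and M :: "'e list set" where
  single: "s \<in> M \<Longrightarrow> s \<in> plus_matches tm M"
| cons: "s \<in> M \<Longrightarrow> r \<in> plus_matches tm M \<Longrightarrow> s \<noteq> [] \<Longrightarrow> r \<noteq> []
          \<Longrightarrow> tm (last s) < tm (hd r) \<Longrightarrow> s @ r \<in> plus_matches tm M"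

fun matches :: "('e \<Rightarrow> 't) \<Rightarrow> ('e \<Rightarrow> rat) \<Rightarrow> 'e set \<Rightarrow> 't pat \<Rightarrow> 'e list set" where
  "matches ety tm I (Ev E) = {[e] | e. e \<in> I \<and> ety e = E}"
| "matches ety tm I (SEQ P Q) =
     {xs @ ys | xs ys. xs \<in> matches ety tm I P \<and> ys \<in> matches ety tm I Q \<and> xs \<noteq> [] \<and> ys \<noteq> []
        \<and> sorted_wrt (<) (map tm (xs @ ys))}"
| "matches ety tm I (Plus P) = plus_matches tm (matches ety tm I P)"

definition greta_V :: "('e \<Rightarrow> 't) \<Rightarrow> ('e \<Rightarrow> rat) \<Rightarrow> 'e set \<Rightarrow> 't pat \<Rightarrow> 'e set" where
  "greta_V ety tm I P = {e. \<exists>t \<in> matches ety tm I P. e \<in> set t}"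

definition greta_E :: "('e \<Rightarrow> 't) \<Rightarrow> ('e \<Rightarrow> rat) \<Rightarrow> 'e set \<Rightarrow> 't pat \<Rightarrow> ('e \<times> 'e) set" where
  "greta_E ety tm I P = {(a, b). \<exists>t \<in> matches ety tm I P. \<exists>i. Suc i < length t \<and> t ! i = a \<and> t ! Suc i = b}"

definition preds :: "('e \<Rightarrow> 't) \<Rightarrow> ('e \<Rightarrow> rat) \<Rightarrow> 'e set \<Rightarrow> 't pat \<Rightarrow> 'e \<Rightarrow> 'e set" where
  "preds ety tm I P e = {p \<in> greta_V ety tm I P. (p, e) \<in> greta_E ety tm I P}"

definition end_events :: "('e \<Rightarrow> 't) \<Rightarrow> ('e \<Rightarrow> rat) \<Rightarrow> 'e set \<Rightarrow> 't pat \<Rightarrow> 'e set" where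
  "end_events ety tm I P = {e \<in> greta_V ety tm I P. ety e = pend P}"

definition COUNT :: "('e \<Rightarrow> 't) \<Rightarrow> ('e \<Rightarrow> rat) \<Rightarrow> 'e set \<Rightarrow> 't pat \<Rightarrow> 't \<Rightarrow> nat" where
  "COUNT ety tm I P E = (\<Sum>t \<in> matches ety tm I P. length (filter (\<lambda>e. ety e = E) t))"

definition MINagg :: "('e \<Rightarrow> 't) \<Rightarrow> ('e \<Rightarrow> rat) \<Rightarrow> 'e set \<Rightarrow> 't pat \<Rightarrow> 't \<Rightarrow> ('e \<Rightarrow> real) \<Rightarrow> ereal" where
  "MINagg ety tm I P E attr =
     Inf {ereal (attr e) | e t. t \<in> matches ety tm I P \<and> e \<in> set t \<and> ety e = E}"

definition MAXagg :: "('e \<Rightarrow> 't) \<Rightarrow> ('e \<Rightarrow> rat) \<Rightarrow> 'e set \<Rightarrow> 't pat \<Rightarrow> 't \<Rightarrow> ('e \<Rightarrow> real) \<Rightarrow> ereal" where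
  "MAXagg ety tm I P E attr =
     Sup {ereal (attr e) | e t. t \<in> matches ety tm I P \<and> e \<in> set t \<and> ety e = E}"

definition SUMagg :: "('e \<Rightarrow> 't) \<Rightarrow> ('e \<Rightarrow> rat) \<Rightarrow> 'e set \<Rightarrow> 't pat \<Rightarrow> 't \<Rightarrow> ('e \<Rightarrow> real) \<Rightarrow> real" where
  "SUMagg ety tm I P E attr =
     (\<Sum>t \<in> matches ety tm I P. \<Sum>e \<leftarrow> filter (\<lambda>e. ety e = E) t. attr e)"

definition AVGagg :: "('e \<Rightarrow> 't) \<Rightarrow> ('e \<Rightarrow> rat) \<Rightarrow> 'e set \<Rightarrow> 't pat \<Rightarrow> 't \<Rightarrow> ('e \<Rightarrow> real) \<Rightarrow> real" where
  "AVGagg ety tm I P E attr = SUMagg ety tm I P E attr / real (COUNT ety tm I P E)"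

end

theory Submission
  imports Defs
begin

text \<open>Since each event type occurs at most once in \<open>P\<close>, the type sequences of the trends form a
local language: a word is generated by \<open>P\<close> iff it starts with \<open>start(P)\<close>, ends with \<open>end(P)\<close>,
and every two adjacent types lie in the follow relation of \<open>P\<close>. Hence the trends are exactly the
time-increasing walks from start events to end events in the graph joining events of following
types. In that graph the GRETA predecessors of a vertex \<open>e\<close> are its graph predecessors reached by
some partial trend, so the partial trends ending at \<open>e\<close> are \<open>[e]\<close> (if \<open>e\<close> has the start type)
together with the one-step extensions of partial trends ending at predecessors of \<open>e\<close>. Induction
in time order identifies \<open>e.count\<close> with the number of these partial trends and the other
recursions with the corresponding aggregates over them; finally, every trend is a partial trend
ending at exactly one end event.\<close>

section \<open>Trends as time-ordered words of the pattern language\<close>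

inductive_set plus_lang :: "'a list set \<Rightarrow> 'a list set" for L where
  base: "u \<in> L \<Longrightarrow> u \<in> plus_lang L"
| append: "u \<in> L \<Longrightarrow> v \<in> plus_lang L \<Longrightarrow> u @ v \<in> plus_lang L"

lemma plus_lang_append_closed:
  "u \<in> plus_lang L \<Longrightarrow> v \<in> plus_lang L \<Longrightarrow> u @ v \<in> plus_lang L"
  by (induction rule: plus_lang.induct) (auto intro: plus_lang.append)

lemma plus_lang_nonempty: "w \<in> plus_lang L \<Longrightarrow> [] \<notin> L \<Longrightarrow> w \<noteq> []"
  by (induction rule: plus_lang.induct) auto

fun pat_lang :: "'t pat \<Rightarrow> 't list set" where
  "pat_lang (Ev E) = {[E]}"
| "pat_lang (SEQ P Q) = {u @ v | u v. u \<in> pat_lang P \<and> v \<in> pat_lang Q}"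
| "pat_lang (Plus P) = plus_lang (pat_lang P)"

lemma pat_lang_nonempty: "[] \<notin> pat_lang P"
  by (induction P) (auto dest: plus_lang_nonempty)

definition time_chain :: "'e set \<Rightarrow> ('e \<Rightarrow> 'r::order) \<Rightarrow> 'e list \<Rightarrow> bool" where
  "time_chain I tm t \<longleftrightarrow> t \<noteq> [] \<and> set t \<subseteq> I \<and> successively (\<lambda>x y. tm x < tm y) t"

lemma time_chain_append_iff:
  "u \<noteq> [] \<Longrightarrow> v \<noteq> [] \<Longrightarrow>
     time_chain I tm (u @ v) \<longleftrightarrow> time_chain I tm u \<and> time_chain I tm v \<and> tm (last u) < tm (hd v)"
  by (auto simp: time_chain_def successively_append_iff)

lemma sorted_wrt_less_map_iff_successively:
  "sorted_wrt (<) (map tm t) \<longleftrightarrow> successively (\<lambda>x y. (tm x :: 'r::order) < tm y) t"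
proof -
  have "transp ((<) :: 'r \<Rightarrow> 'r \<Rightarrow> bool)" by (auto intro: transpI)
  then show ?thesis by (simp add: successively_conv_sorted_wrt[symmetric] successively_map)
qed

lemma time_chain_iff_sorted:
  "time_chain I tm t \<longleftrightarrow> t \<noteq> [] \<and> set t \<subseteq> I \<and> sorted_wrt (<) (map tm t)"
  by (simp add: time_chain_def sorted_wrt_less_map_iff_successively)

lemma time_chain_map_split:
  assumes "time_chain I tm t" "map ety t = u @ v" "u \<noteq> []" "v \<noteq> []"
  obtains xs ys where "t = xs @ ys" "map ety xs = u" "map ety ys = v"
    "time_chain I tm xs" "time_chain I tm ys" "tm (last xs) < tm (hd ys)"
proof -
  obtain xs ys where t: "t = xs @ ys" "map ety xs = u" "map ety ys = v"
    using assms(2) by (auto simp: map_eq_append_conv)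
  with assms have "xs \<noteq> []" "ys \<noteq> []" by auto
  with assms(1) t show thesis using that by (simp add: time_chain_append_iff)
qed

lemma plus_lang_imp_plus_matches:
  assumes "map ety t \<in> plus_lang L" "time_chain I tm t"
    and M: "M = {t. time_chain I tm t \<and> map ety t \<in> L}" and "[] \<notin> L"
  shows "t \<in> plus_matches tm M"
  using assms(1,2)
proof (induction "map ety t" arbitrary: t rule: plus_lang.induct)
  case (base t)
  then show ?case by (auto simp: M intro: plus_matches.single)
next
  case (append u v t)
  have "u \<noteq> []" "v \<noteq> []"
    using append.hyps assms(4) by (auto dest: plus_lang_nonempty)
  with append.prems append.hyps(4) obtain xs ys where
    "t = xs @ ys" "map ety xs = u" "map ety ys = v"
    "time_chain I tm xs" "time_chain I tm ys" "tm (last xs) < tm (hd ys)"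
    by (metis time_chain_map_split)
  with append show ?case
    by (auto simp: M time_chain_def intro!: plus_matches.cons)
qed

lemma plus_matches_eq:
  assumes M: "M = {t. time_chain I tm t \<and> map ety t \<in> L}" and "[] \<notin> L"
  shows "plus_matches tm M = {t. time_chain I tm t \<and> map ety t \<in> plus_lang L}"
proof (intro set_eqI iffI; clarsimp)
  fix t assume "t \<in> plus_matches tm M"
  then show "time_chain I tm t \<and> map ety t \<in> plus_lang L"
    by (induction rule: plus_matches.induct)
       (auto simp: M time_chain_append_iff intro: plus_lang.intros)
next
  fix t assume "time_chain I tm t" "map ety t \<in> plus_lang L"
  with assms show "t \<in> plus_matches tm M"
    by (blast intro: plus_lang_imp_plus_matches)
qed

lemma matches_eq_pat_lang:
  "matches ety tm I P = {t. time_chain I tm t \<and> map ety t \<in> pat_lang P}"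
proof (induction P)
  case (Ev E)
  show ?case
    by (auto simp: time_chain_def map_eq_Cons_conv)
next
  case (Plus P)
  then show ?case
    by (simp add: plus_matches_eq pat_lang_nonempty)
next
  case (SEQ P Q)
  have "t \<in> matches ety tm I (SEQ P Q) \<longleftrightarrow> time_chain I tm t \<and> map ety t \<in> pat_lang (SEQ P Q)"
    for t
  proof
    assume "t \<in> matches ety tm I (SEQ P Q)"
    then show "time_chain I tm t \<and> map ety t \<in> pat_lang (SEQ P Q)"
      by (fastforce simp: SEQ.IH time_chain_iff_sorted)
  next
    assume t: "time_chain I tm t \<and> map ety t \<in> pat_lang (SEQ P Q)"
    then obtain u v where uv: "map ety t = u @ v" "u \<in> pat_lang P" "v \<in> pat_lang Q"
      by auto
    then have "u \<noteq> []" "v \<noteq> []" using pat_lang_nonempty by auto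
    with t uv obtain xs ys where "t = xs @ ys" "map ety xs = u" "map ety ys = v"
      "time_chain I tm xs" "time_chain I tm ys"
      by (metis time_chain_map_split)
    with t uv show "t \<in> matches ety tm I (SEQ P Q)"
      by (auto simp: SEQ.IH time_chain_iff_sorted)
  qed
  then show ?case by blast
qed

section \<open>Patterns with distinct types denote local languages\<close>

fun follow :: "'t pat \<Rightarrow> ('t \<times> 't) set" where
  "follow (Ev E) = {}"
| "follow (SEQ P Q) = follow P \<union> follow Q \<union> {(pend P, pstart Q)}"
| "follow (Plus P) = follow P \<union> {(pend P, pstart P)}"

definition local_word :: "'t pat \<Rightarrow> 't list \<Rightarrow> bool" where
  "local_word P w \<longleftrightarrow> w \<noteq> [] \<and> hd w = pstart P \<and> last w = pend P
     \<and> set w \<subseteq> set (pat_types P) \<and> successively (\<lambda>x y. (x, y) \<in> follow P) w"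

lemma pstart_in_pat_types: "pstart P \<in> set (pat_types P)"
  by (induction P) auto

lemma pend_in_pat_types: "pend P \<in> set (pat_types P)"
  by (induction P) auto

lemma follow_subset: "follow P \<subseteq> set (pat_types P) \<times> set (pat_types P)"
  by (induction P) (auto simp: pstart_in_pat_types pend_in_pat_types)

lemma local_word_append:
  assumes "local_word P u" "local_word Q v"
    and "follow P \<union> follow Q \<union> {(pend P, pstart Q)} \<subseteq> follow R"
    and "pstart P = pstart R" "pend Q = pend R"
    and "set (pat_types P) \<union> set (pat_types Q) \<subseteq> set (pat_types R)"
  shows "local_word R (u @ v)"
  using assms unfolding local_word_def
  by (auto simp: successively_append_iff elim!: successively_mono)

lemma pat_lang_local_word: "w \<in> pat_lang P \<Longrightarrow> local_word P w"
proof (induction P arbitrary: w)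
  case (Ev E)
  then show ?case by (simp add: local_word_def)
next
  case (SEQ P Q)
  then show ?case by (auto intro!: local_word_append[where R = "SEQ P Q"])
next
  case (Plus P)
  from \<open>w \<in> pat_lang (Plus P)\<close> have "w \<in> plus_lang (pat_lang P)" by simp
  then show ?case
  proof (induction rule: plus_lang.induct)
    case (base u)
    then have "local_word P u" using Plus.IH by blast
    then show ?case by (auto simp: local_word_def elim!: successively_mono)
  next
    case (append u v)
    then show ?case using Plus.IH by (auto intro!: local_word_append[where R = "Plus P"])
  qed
qed

lemma not_successively_split:
  "\<not> successively R w \<Longrightarrow> \<exists>u v. w = u @ v \<and> u \<noteq> [] \<and> v \<noteq> [] \<and> \<not> R (last u) (hd v)"
proof (induction w)
  case (Cons x w)
  show ?case
  proof (cases "successively R w")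
    case True
    with Cons.prems obtain y w' where "w = y # w'" "\<not> R x y"
      by (cases w) auto
    then show ?thesis by (intro exI[of _ "[x]"] exI[of _ w]) auto
  next
    case False
    with Cons.IH obtain u v where "w = u @ v" "u \<noteq> []" "v \<noteq> []" "\<not> R (last u) (hd v)"
      by blast
    then show ?thesis by (intro exI[of _ "x # u"] exI[of _ v]) auto
  qed
qed simp

lemma successively_stays_in:
  assumes "successively R v" "v \<noteq> []" "hd v \<in> T" "\<And>x y. R x y \<Longrightarrow> x \<in> T \<Longrightarrow> y \<in> T"
  shows "set v \<subseteq> T"
  using assms
proof (induction v)
  case (Cons a v)
  then show ?case by (cases v) auto
qed simp

lemma local_word_Plus_cases:
  assumes w: "local_word (Plus P) w"
  shows "local_word P w
    \<or> (\<exists>u v. w = u @ v \<and> u \<noteq> [] \<and> v \<noteq> [] \<and> local_word (Plus P) u \<and> local_word (Plus P) v)"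
proof (cases "local_word P w")
  case False
  with w have "\<not> successively (\<lambda>x y. (x, y) \<in> follow P) w"
    by (simp add: local_word_def)
  then obtain u v where uv: "w = u @ v" "u \<noteq> []" "v \<noteq> []" "(last u, hd v) \<notin> follow P"
    using not_successively_split by blast
  with w have "last u = pend P" "hd v = pstart P"
    by (auto simp: local_word_def successively_append_iff)
  with w uv show ?thesis
    by (auto simp: local_word_def successively_append_iff)
qed simp

lemma local_word_SEQ_split:
  assumes dist: "distinct (pat_types (SEQ P Q))" and w: "local_word (SEQ P Q) w"
  obtains u v where "w = u @ v" "local_word P u" "local_word Q v"
proof -
  let ?TP = "set (pat_types P)" and ?TQ = "set (pat_types Q)"
  let ?R = "\<lambda>x y. (x, y) \<in> follow (SEQ P Q)"
  \<comment> \<open>Split \<open>w\<close> where it leaves the types of \<open>P\<close>; as the type sets are disjoint, the only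
    step of \<open>follow (SEQ P Q)\<close> between them is \<open>(pend P, pstart Q)\<close>, and none leads back.\<close>
  have disj: "?TP \<inter> ?TQ = {}" using dist by simp
  have inP: "follow P \<subseteq> ?TP \<times> ?TP" and inQ: "follow Q \<subseteq> ?TQ \<times> ?TQ"
    by (rule follow_subset)+
  have ends: "pstart P \<in> ?TP" "pend P \<in> ?TP" "pstart Q \<in> ?TQ" "pend Q \<in> ?TQ"
    by (simp_all add: pstart_in_pat_types pend_in_pat_types)
  define u where "u = takeWhile (\<lambda>x. x \<in> ?TP) w"
  define v where "v = dropWhile (\<lambda>x. x \<in> ?TP) w"
  have w_eq: "w = u @ v" by (simp add: u_def v_def)
  have u_TP: "set u \<subseteq> ?TP" by (auto simp: u_def dest: set_takeWhileD)
  have "u \<noteq> []" using w ends by (cases w) (auto simp: u_def local_word_def)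
  have "v \<noteq> []"
  proof
    assume "v = []"
    then have "last w \<in> ?TP" using u_TP \<open>u \<noteq> []\<close> w_eq by (metis append_Nil2 last_in_set subsetD)
    with w ends disj show False by (auto simp: local_word_def)
  qed
  have "hd v \<notin> ?TP" using \<open>v \<noteq> []\<close> unfolding v_def by (rule hd_dropWhile)
  moreover have "hd v \<in> ?TP \<union> ?TQ"
  proof -
    have "set v \<subseteq> ?TP \<union> ?TQ" using w by (auto simp: w_eq local_word_def)
    with \<open>v \<noteq> []\<close> show ?thesis using hd_in_set by blast
  qed
  ultimately have hd_v: "hd v \<in> ?TQ" by blast
  have succ: "successively ?R u" "successively ?R v" "?R (last u) (hd v)"
    using w \<open>u \<noteq> []\<close> \<open>v \<noteq> []\<close> by (auto simp: w_eq local_word_def successively_append_iff)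
  have v_TQ: "set v \<subseteq> ?TQ"
    using successively_stays_in[OF succ(2) \<open>v \<noteq> []\<close> hd_v] inP inQ ends disj by auto
  have "last u \<in> ?TP" using u_TP \<open>u \<noteq> []\<close> by auto
  with succ(3) hd_v inP inQ disj have "last u = pend P" "hd v = pstart Q" by auto
  moreover have "successively (\<lambda>x y. (x, y) \<in> follow P) u"
    using succ(1) u_TP inQ ends disj by (auto elim!: successively_mono)
  moreover have "successively (\<lambda>x y. (x, y) \<in> follow Q) v"
    using succ(2) v_TQ inP ends disj by (auto elim!: successively_mono)
  ultimately have "local_word P u" "local_word Q v"
    using w u_TP v_TQ \<open>u \<noteq> []\<close> \<open>v \<noteq> []\<close> by (auto simp: local_word_def w_eq)
  with w_eq show thesis by (rule that)
qed

lemma local_word_pat_lang: "distinct (pat_types P) \<Longrightarrow> local_word P w \<Longrightarrow> w \<in> pat_lang P"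
proof (induction P arbitrary: w)
  case (Ev E)
  then show ?case by (cases w; cases "tl w") (auto simp: local_word_def)
next
  case (SEQ P Q)
  obtain u v where "w = u @ v" "local_word P u" "local_word Q v"
    using SEQ.prems by (rule local_word_SEQ_split)
  with SEQ.IH SEQ.prems(1) show ?case by auto
next
  case (Plus P)
  from \<open>local_word (Plus P) w\<close> show ?case
  proof (induction w rule: length_induct)
    case (1 w)
    from local_word_Plus_cases[OF "1.prems"] show ?case
    proof (elim disjE exE conjE)
      assume "local_word P w"
      with Plus show ?case by (auto intro: plus_lang.base)
    next
      fix u v assume "w = u @ v" "u \<noteq> []" "v \<noteq> []" "local_word (Plus P) u" "local_word (Plus P) v"
      with "1.IH" show ?case by (auto intro: plus_lang_append_closed)
    qed
  qed
qed

theorem pat_lang_eq_local_words: "wf_pat P \<Longrightarrow> pat_lang P = {w. local_word P w}"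
  using pat_lang_local_word local_word_pat_lang by (auto simp: wf_pat_def)

section \<open>Walks in a time-ordered graph\<close>

lemma INF_UNION:
  "(INF x \<in> (\<Union>y \<in> A. g y). f x) = (INF y \<in> A. INF x \<in> g y. f x :: _ :: complete_lattice)"
  by (rule order_antisym) (blast intro: INF_greatest INF_lower2)+

text \<open>\<open>F\<close> relates events that may be adjacent in a trend; \<open>trends_to e\<close> are the partial trends
  ending at \<open>e\<close>, whose number is the paper's \<open>e.count\<close>.\<close>

locale trend_graph =
  fixes U :: "'e set" and F :: "'e \<Rightarrow> 'e \<Rightarrow> bool" and S T :: "'e \<Rightarrow> bool"
    and rank :: "'e \<Rightarrow> 'r::linorder"
  assumes finite_U: "finite U" and F_rank: "F x y \<Longrightarrow> rank x < rank y"
begin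

definition walk :: "'e list \<Rightarrow> bool" where
  "walk t \<longleftrightarrow> t \<noteq> [] \<and> set t \<subseteq> U \<and> successively F t"

definition trends :: "'e list set" where
  "trends = {t. walk t \<and> S (hd t) \<and> T (last t)}"

definition vertices :: "'e set" where
  "vertices = {e. \<exists>t \<in> trends. e \<in> set t}"

definition edges :: "('e \<times> 'e) set" where
  "edges = {(a, b). \<exists>t \<in> trends. \<exists>i. Suc i < length t \<and> t ! i = a \<and> t ! Suc i = b}"

definition predecessors :: "'e \<Rightarrow> 'e set" where
  "predecessors e = {p \<in> vertices. (p, e) \<in> edges}"

definition sinks :: "'e set" where
  "sinks = {e \<in> vertices. T e}"

definition trends_to :: "'e \<Rightarrow> 'e list set" where
  "trends_to e = {w. walk w \<and> S (hd w) \<and> last w = e}"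

definition on_trends_to :: "'e \<Rightarrow> 'e set" where
  "on_trends_to e = \<Union> (set ` trends_to e)"

lemma walk_distinct: "walk t \<Longrightarrow> distinct t"
proof -
  assume "walk t"
  then have "successively (\<lambda>x y. rank x < rank y) t"
    by (auto simp: walk_def F_rank elim: successively_mono)
  then have "distinct (map rank t)"
    by (simp add: sorted_wrt_less_map_iff_successively[symmetric] strict_sorted_iff)
  then show "distinct t" by (simp add: distinct_map)
qed

lemma finite_walks: "finite {t. walk t}"
  by (rule finite_subset[OF _ finite_subset_distinct[OF finite_U]])
     (auto simp: walk_def walk_distinct)

lemma finite_trends_to: "finite (trends_to e)"
  by (rule finite_subset[OF _ finite_walks]) (auto simp: trends_to_def)

lemma walk_Nil [simp]: "\<not> walk []"
  by (simp add: walk_def)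

lemma walk_single [simp]: "walk [e] \<longleftrightarrow> e \<in> U"
  by (simp add: walk_def)

lemma walk_append_iff:
  "u \<noteq> [] \<Longrightarrow> v \<noteq> [] \<Longrightarrow> walk (u @ v) \<longleftrightarrow> walk u \<and> walk v \<and> F (last u) (hd v)"
  by (auto simp: walk_def successively_append_iff)

lemma walk_append_prefix: "walk (u @ v) \<Longrightarrow> u \<noteq> [] \<Longrightarrow> walk u"
  by (auto simp: walk_def successively_append_iff)

lemma walk_append_suffix: "walk (u @ v) \<Longrightarrow> v \<noteq> [] \<Longrightarrow> walk v"
  by (auto simp: walk_def successively_append_iff)

lemma vertices_iff: "e \<in> vertices \<longleftrightarrow> (\<exists>x y. x @ e # y \<in> trends)"
  by (auto simp: vertices_def in_set_conv_decomp)

lemma edges_iff: "(a, b) \<in> edges \<longleftrightarrow> (\<exists>x y. x @ a # b # y \<in> trends)"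
proof
  assume "(a, b) \<in> edges"
  then obtain t i where "t \<in> trends" "Suc i < length t" "t ! i = a" "t ! Suc i = b"
    by (auto simp: edges_def)
  moreover from this have "t = take i t @ a # b # drop (Suc (Suc i)) t"
    by (metis Cons_nth_drop_Suc Suc_lessD id_take_nth_drop)
  ultimately show "\<exists>x y. x @ a # b # y \<in> trends" by metis
next
  assume "\<exists>x y. x @ a # b # y \<in> trends"
  then obtain x y where "x @ a # b # y \<in> trends" by blast
  then show "(a, b) \<in> edges"
    unfolding edges_def by (auto intro!: bexI exI[of _ "length x"] simp: nth_append)
qed

lemma vertices_subset: "vertices \<subseteq> U"
  by (auto simp: vertices_def trends_def walk_def)

lemma finite_vertices: "finite vertices"
  using finite_U vertices_subset by (rule finite_subset[rotated])

lemma finite_predecessors: "finite (predecessors e)"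
  using finite_vertices by (simp add: predecessors_def)

lemma finite_sinks: "finite sinks"
  using finite_vertices by (simp add: sinks_def)

lemma trends_to_snoc_iff:
  "w \<in> trends_to e \<longleftrightarrow>
    (w = [e] \<and> S e \<and> e \<in> U) \<or> (\<exists>p w'. w = w' @ [e] \<and> w' \<in> trends_to p \<and> F p e \<and> e \<in> U)"
proof (cases w rule: rev_cases)
  case (snoc w' x)
  then show ?thesis
    by (cases "w' = []") (auto simp: trends_to_def walk_append_iff)
qed (simp add: trends_to_def walk_def)

text \<open>A partial trend ending at \<open>p\<close> can be spliced with the suffix of any trend through \<open>e\<close>,
  so the GRETA edges into a vertex are determined by \<open>F\<close> alone.\<close>

lemma predecessors_iff:
  assumes "e \<in> vertices"
  shows "p \<in> predecessors e \<longleftrightarrow> F p e \<and> trends_to p \<noteq> {}"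
proof
  assume "p \<in> predecessors e"
  then obtain x y where t: "x @ p # e # y \<in> trends"
    by (auto simp: predecessors_def edges_iff)
  then have "walk ((x @ [p]) @ (e # y))" by (simp add: trends_def)
  then have "F p e" "walk (x @ [p])" using walk_append_iff[of "x @ [p]" "e # y"] by simp_all
  with t have "x @ [p] \<in> trends_to p" by (cases x) (auto simp: trends_def trends_to_def)
  with \<open>F p e\<close> show "F p e \<and> trends_to p \<noteq> {}" by blast
next
  assume "F p e \<and> trends_to p \<noteq> {}"
  then obtain w where "F p e" "w \<in> trends_to p" by blast
  from assms obtain x y where "x @ e # y \<in> trends" by (auto simp: vertices_iff)
  then have "walk (x @ e # y)" "T (last (e # y))" by (simp_all add: trends_def)
  then have "walk (e # y)" by (blast intro: walk_append_suffix)
  have "w = butlast w @ [p]" "w \<noteq> []" using \<open>w \<in> trends_to p\<close> by (auto simp: trends_to_def walk_def)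
  moreover have "w @ e # y \<in> trends"
    using \<open>w \<in> trends_to p\<close> \<open>w \<noteq> []\<close> \<open>F p e\<close> \<open>walk (e # y)\<close> \<open>T (last (e # y))\<close>
    by (auto simp: trends_def trends_to_def walk_append_iff[of w "e # y"])
  ultimately have "butlast w @ p # e # y \<in> trends" by (metis append.assoc append_Cons append_Nil)
  then show "p \<in> predecessors e"
    by (auto simp: predecessors_def edges_iff vertices_iff)
qed

lemma trends_to_nonempty: "e \<in> vertices \<Longrightarrow> trends_to e \<noteq> {}"
proof -
  assume "e \<in> vertices"
  then obtain x y where t: "x @ e # y \<in> trends" by (auto simp: vertices_iff)
  then have "walk ((x @ [e]) @ y)" by (simp add: trends_def)
  then have "walk (x @ [e])" by (rule walk_append_prefix) simp
  with t have "x @ [e] \<in> trends_to e" by (cases x) (auto simp: trends_def trends_to_def)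
  then show ?thesis by blast
qed

lemma trends_to_rec:
  assumes "e \<in> vertices"
  shows "trends_to e =
    (if S e then {[e]} else {}) \<union> (\<Union>p \<in> predecessors e. (\<lambda>w. w @ [e]) ` trends_to p)"
proof (rule set_eqI)
  fix w
  have "e \<in> U" using assms vertices_subset by blast
  then have "w \<in> trends_to e \<longleftrightarrow>
      (w = [e] \<and> S e) \<or> (\<exists>p \<in> predecessors e. \<exists>w' \<in> trends_to p. w = w' @ [e])"
    unfolding trends_to_snoc_iff[of w e] using predecessors_iff[OF assms] by blast
  then show "w \<in> trends_to e \<longleftrightarrow>
      w \<in> (if S e then {[e]} else {}) \<union> (\<Union>p \<in> predecessors e. (\<lambda>w. w @ [e]) ` trends_to p)"
    by auto
qed

lemma predecessors_subset: "predecessors e \<subseteq> vertices"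
  by (auto simp: predecessors_def)

lemma vertices_induct [consumes 1, case_names step]:
  assumes "e \<in> vertices"
    and step: "\<And>e. e \<in> vertices \<Longrightarrow> (\<And>p. p \<in> predecessors e \<Longrightarrow> Q p) \<Longrightarrow> Q e"
  shows "Q e"
  using assms(1)
proof (induction "card {x \<in> U. rank x < rank e}" arbitrary: e rule: less_induct)
  case less
  show ?case
  proof (rule step[OF less.prems])
    fix p assume p: "p \<in> predecessors e"
    then have "rank p < rank e" using F_rank predecessors_iff[OF less.prems] by blast
    moreover have "p \<in> U" using p predecessors_subset vertices_subset by blast
    ultimately have "{x \<in> U. rank x < rank p} \<subset> {x \<in> U. rank x < rank e}" by auto
    then have "card {x \<in> U. rank x < rank p} < card {x \<in> U. rank x < rank e}"
      using finite_U by (intro psubset_card_mono) auto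
    with p predecessors_subset show "Q p" using less.hyps by blast
  qed
qed

lemma sum_trends_to_rec:
  assumes "e \<in> vertices"
  shows "(\<Sum>w \<in> trends_to e. f w)
    = (if S e then f [e] else 0) + (\<Sum>p \<in> predecessors e. \<Sum>w \<in> trends_to p. f (w @ [e]))"
proof -
  let ?ext = "\<lambda>p. (\<lambda>w. w @ [e]) ` trends_to p"
  have "(\<Sum>w \<in> trends_to e. f w)
      = (\<Sum>w \<in> (if S e then {[e]} else {}). f w) + (\<Sum>w \<in> (\<Union>p \<in> predecessors e. ?ext p). f w)"
    unfolding trends_to_rec[OF assms]
    by (rule sum.union_disjoint)
       (simp_all add: finite_predecessors finite_trends_to, auto simp: trends_to_def)
  also have "(\<Sum>w \<in> (\<Union>p \<in> predecessors e. ?ext p). f w) = (\<Sum>p \<in> predecessors e. \<Sum>w \<in> ?ext p. f w)"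
    by (rule sum.UNION_disjoint)
       (simp_all add: finite_predecessors finite_trends_to, auto simp: trends_to_def)
  also have "\<dots> = (\<Sum>p \<in> predecessors e. \<Sum>w \<in> trends_to p. f (w @ [e]))"
    by (intro sum.cong refl sum.reindex_cong[where l = "\<lambda>w. w @ [e]"]) (auto intro: inj_onI)
  finally show ?thesis by simp
qed

lemma trends_eq_UN_sinks: "trends = (\<Union>e \<in> sinks. trends_to e)"
  by (fastforce simp: trends_def trends_to_def sinks_def vertices_def walk_def)

lemma sum_trends: "(\<Sum>t \<in> trends. f t) = (\<Sum>e \<in> sinks. \<Sum>w \<in> trends_to e. f w)"
  unfolding trends_eq_UN_sinks
  by (rule sum.UNION_disjoint)
     (simp_all add: finite_sinks finite_trends_to, auto simp: trends_to_def)

lemma card_trends_to: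
  assumes cnt: "\<forall>e \<in> vertices. cnt e = (if S e then 1 else 0) + (\<Sum>p \<in> predecessors e. cnt p)"
    and "e \<in> vertices"
  shows "cnt e = card (trends_to e)"
  using \<open>e \<in> vertices\<close>
proof (induction rule: vertices_induct)
  case (step e)
  have "card (trends_to e) = (if S e then 1 else 0) + (\<Sum>p \<in> predecessors e. card (trends_to p))"
    using sum_trends_to_rec[OF step.hyps, of "\<lambda>_. 1 :: nat"] by simp
  also have "\<dots> = cnt e" using cnt step by (simp cong: sum.cong)
  finally show ?case by simp
qed

lemma sum_weights_trends_to:
  fixes c h :: "'e \<Rightarrow> 'a::comm_semiring_1"
  assumes cnt: "\<forall>e \<in> vertices. cnt e = (if S e then 1 else 0) + (\<Sum>p \<in> predecessors e. cnt p)"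
    and h: "\<forall>e \<in> vertices. h e = c e * of_nat (cnt e) + (\<Sum>p \<in> predecessors e. h p)"
    and "e \<in> vertices"
  shows "h e = (\<Sum>w \<in> trends_to e. \<Sum>x \<leftarrow> w. c x)"
  using \<open>e \<in> vertices\<close>
proof (induction rule: vertices_induct)
  case (step e)
  have extend: "(\<Sum>w \<in> trends_to p. (\<Sum>x \<leftarrow> w. c x) + c e) = h p + c e * of_nat (cnt p)"
    if "p \<in> predecessors e" for p
  proof -
    have "cnt p = card (trends_to p)" using card_trends_to[OF cnt] that predecessors_subset by blast
    with step.IH[OF that] show ?thesis by (simp add: sum.distrib mult.commute)
  qed
  have "(\<Sum>w \<in> trends_to e. \<Sum>x \<leftarrow> w. c x)
      = (if S e then c e else 0) + (\<Sum>p \<in> predecessors e. h p + c e * of_nat (cnt p))"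
    by (simp add: sum_trends_to_rec[OF step.hyps] extend)
  also have "\<dots> = c e * of_nat (cnt e) + (\<Sum>p \<in> predecessors e. h p)"
    using cnt step.hyps by (simp add: sum.distrib sum_distrib_left distrib_left add_ac)
  also have "\<dots> = h e" using h step.hyps by simp
  finally show ?case by simp
qed

lemma on_trends_to_rec:
  assumes "e \<in> vertices"
  shows "on_trends_to e = insert e (\<Union>p \<in> predecessors e. on_trends_to p)"
proof -
  obtain w where "w \<in> trends_to e" using trends_to_nonempty[OF assms] by blast
  then have "e \<in> set w" by (auto simp: trends_to_def walk_def)
  with \<open>w \<in> trends_to e\<close> have "e \<in> on_trends_to e" by (auto simp: on_trends_to_def)
  moreover have "on_trends_to e \<subseteq> insert e (\<Union>p \<in> predecessors e. on_trends_to p)"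
    by (auto simp: on_trends_to_def trends_to_rec[OF assms] split: if_splits)
  moreover have "on_trends_to p \<subseteq> on_trends_to e" if "p \<in> predecessors e" for p
    using that by (force simp: on_trends_to_def trends_to_rec[OF assms])
  ultimately show ?thesis by blast
qed

lemma INF_on_trends_to:
  fixes g h :: "'e \<Rightarrow> 'a::complete_lattice"
  assumes h: "\<forall>e \<in> vertices. h e = Inf ((if Q e then {g e} else {}) \<union> h ` predecessors e)"
    and "e \<in> vertices"
  shows "h e = (INF x \<in> {x \<in> on_trends_to e. Q x}. g x)"
  using \<open>e \<in> vertices\<close>
proof (induction rule: vertices_induct)
  case (step e)
  have "{x \<in> on_trends_to e. Q x}
      = (if Q e then {e} else {}) \<union> (\<Union>p \<in> predecessors e. {x \<in> on_trends_to p. Q x})"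
    by (auto simp: on_trends_to_rec[OF step.hyps])
  with h step show ?case
    by (cases "Q e") (simp_all add: INF_union INF_UNION Inf_union_distrib)
qed

lemma SUP_on_trends_to:
  fixes g h :: "'e \<Rightarrow> 'a::complete_lattice"
  assumes h: "\<forall>e \<in> vertices. h e = Sup ((if Q e then {g e} else {}) \<union> h ` predecessors e)"
    and "e \<in> vertices"
  shows "h e = (SUP x \<in> {x \<in> on_trends_to e. Q x}. g x)"
  using \<open>e \<in> vertices\<close>
proof (induction rule: vertices_induct)
  case (step e)
  have "{x \<in> on_trends_to e. Q x}
      = (if Q e then {e} else {}) \<union> (\<Union>p \<in> predecessors e. {x \<in> on_trends_to p. Q x})"
    by (auto simp: on_trends_to_rec[OF step.hyps])
  with h step show ?case
    by (cases "Q e") (simp_all add: SUP_union SUP_UNION Sup_union_distrib)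
qed

lemma on_trends_eq_UN_sinks: "\<Union> (set ` trends) = (\<Union>e \<in> sinks. on_trends_to e)"
  by (simp add: trends_eq_UN_sinks on_trends_to_def)

lemma sum_weights_sinks:
  fixes c h :: "'e \<Rightarrow> 'a::comm_semiring_1"
  assumes "\<forall>e \<in> vertices. cnt e = (if S e then 1 else 0) + (\<Sum>p \<in> predecessors e. cnt p)"
    and "\<forall>e \<in> vertices. h e = c e * of_nat (cnt e) + (\<Sum>p \<in> predecessors e. h p)"
  shows "(\<Sum>e \<in> sinks. h e) = (\<Sum>t \<in> trends. \<Sum>x \<leftarrow> t. c x)"
  using sum_weights_trends_to[OF assms] by (simp add: sum_trends sinks_def)

lemma INF_sinks:
  fixes g h :: "'e \<Rightarrow> 'a::complete_lattice"
  assumes "\<forall>e \<in> vertices. h e = Inf ((if Q e then {g e} else {}) \<union> h ` predecessors e)"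
  shows "(INF e \<in> sinks. h e) = (INF x \<in> {x \<in> \<Union> (set ` trends). Q x}. g x)"
proof -
  have "{x \<in> \<Union> (set ` trends). Q x} = (\<Union>e \<in> sinks. {x \<in> on_trends_to e. Q x})"
    by (auto simp: on_trends_eq_UN_sinks)
  then show ?thesis
    using INF_on_trends_to[OF assms] by (simp add: INF_UNION sinks_def)
qed

lemma SUP_sinks:
  fixes g h :: "'e \<Rightarrow> 'a::complete_lattice"
  assumes "\<forall>e \<in> vertices. h e = Sup ((if Q e then {g e} else {}) \<union> h ` predecessors e)"
  shows "(SUP e \<in> sinks. h e) = (SUP x \<in> {x \<in> \<Union> (set ` trends). Q x}. g x)"
proof -
  have "{x \<in> \<Union> (set ` trends). Q x} = (\<Union>e \<in> sinks. {x \<in> on_trends_to e. Q x})"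
    by (auto simp: on_trends_eq_UN_sinks)
  then show ?thesis
    using SUP_on_trends_to[OF assms] by (simp add: SUP_UNION sinks_def)
qed

end

section \<open>The GRETA graph\<close>

lemma successively_conj_iff:
  "successively (\<lambda>x y. R x y \<and> R' x y) xs \<longleftrightarrow> successively R xs \<and> successively R' xs"
  by (induction xs rule: induct_list012) auto

lemma length_filter_eq_sum_list: "length (filter Q xs) = (\<Sum>x \<leftarrow> xs. if Q x then 1 else 0)"
  by (induction xs) auto

locale greta_graph =
  fixes ety :: "'e \<Rightarrow> 't" and tm :: "'e \<Rightarrow> rat" and I :: "'e set" and P :: "'t pat"
  assumes wf: "wf_pat P" and finite_I: "finite I"

sublocale greta_graph \<subseteq> trend_graph "{x \<in> I. ety x \<in> set (pat_types P)}"
  "\<lambda>x y. tm x < tm y \<and> (ety x, ety y) \<in> follow P" "\<lambda>x. ety x = pstart P" "\<lambda>x. ety x = pend P" tm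
  using finite_I by unfold_locales auto

context greta_graph
begin

lemma matches_eq_trends: "matches ety tm I P = trends"
  unfolding matches_eq_pat_lang pat_lang_eq_local_words[OF wf] trends_def walk_def
    time_chain_def local_word_def
  by (fastforce simp: successively_conj_iff successively_map last_map hd_map)

lemma greta_V_eq_vertices: "greta_V ety tm I P = vertices"
  by (simp add: greta_V_def vertices_def matches_eq_trends)

lemma preds_eq_predecessors: "preds ety tm I P = predecessors"
  by (simp add: fun_eq_iff preds_def predecessors_def greta_V_eq_vertices greta_E_def edges_def
      matches_eq_trends)

lemma end_events_eq_sinks: "end_events ety tm I P = sinks"
  by (simp add: end_events_def sinks_def greta_V_eq_vertices)

lemma COUNT_eq_sum_end_events:
  assumes cnt: "\<forall>e \<in> greta_V ety tm I P.
      cnt e = (if ety e = pstart P then 1 else 0) + (\<Sum>p \<in> preds ety tm I P e. cnt p)"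
    and cntE: "\<forall>e \<in> greta_V ety tm I P.
      cntE e = (if ety e = E then cnt e else 0) + (\<Sum>p \<in> preds ety tm I P e. cntE p)"
  shows "COUNT ety tm I P E = (\<Sum>e \<in> end_events ety tm I P. cntE e)"
proof -
  have "\<forall>e \<in> vertices.
      cntE e = (if ety e = E then 1 else 0) * of_nat (cnt e) + (\<Sum>p \<in> predecessors e. cntE p)"
    using cntE by (simp add: greta_V_eq_vertices preds_eq_predecessors)
  from sum_weights_sinks[OF _ this] cnt show ?thesis
    by (simp add: COUNT_def matches_eq_trends end_events_eq_sinks greta_V_eq_vertices
        preds_eq_predecessors length_filter_eq_sum_list)
qed

lemma SUMagg_eq_sum_end_events:
  assumes cnt: "\<forall>e \<in> greta_V ety tm I P.
      cnt e = (if ety e = pstart P then 1 else 0) + (\<Sum>p \<in> preds ety tm I P e. cnt p)"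
    and sm: "\<forall>e \<in> greta_V ety tm I P.
      sm e = (if ety e = E then attr e * real (cnt e) else 0) + (\<Sum>p \<in> preds ety tm I P e. sm p)"
  shows "SUMagg ety tm I P E attr = (\<Sum>e \<in> end_events ety tm I P. sm e)"
proof -
  have "\<forall>e \<in> vertices.
      sm e = (if ety e = E then attr e else 0) * real (cnt e) + (\<Sum>p \<in> predecessors e. sm p)"
    using sm by (simp add: greta_V_eq_vertices preds_eq_predecessors)
  from sum_weights_sinks[OF _ this] cnt show ?thesis
    by (simp add: SUMagg_def matches_eq_trends end_events_eq_sinks greta_V_eq_vertices
        preds_eq_predecessors sum_list_map_filter')
qed

lemma attr_set_eq_image:
  "{ereal (attr e) | e t. t \<in> matches ety tm I P \<and> e \<in> set t \<and> ety e = E}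
    = (\<lambda>x. ereal (attr x)) ` {x \<in> \<Union> (set ` trends). ety x = E}"
  by (auto simp: matches_eq_trends)

lemma MINagg_eq_INF_end_events:
  assumes "\<forall>e \<in> greta_V ety tm I P.
      mn e = Inf ((if ety e = E then {ereal (attr e)} else {}) \<union> mn ` preds ety tm I P e)"
  shows "MINagg ety tm I P E attr = Inf (mn ` end_events ety tm I P)"
  unfolding MINagg_def attr_set_eq_image end_events_eq_sinks
  using INF_sinks[of mn "\<lambda>x. ety x = E" "\<lambda>x. ereal (attr x)"] assms
  by (simp add: greta_V_eq_vertices preds_eq_predecessors)

lemma MAXagg_eq_SUP_end_events:
  assumes "\<forall>e \<in> greta_V ety tm I P.
      mx e = Sup ((if ety e = E then {ereal (attr e)} else {}) \<union> mx ` preds ety tm I P e)"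
  shows "MAXagg ety tm I P E attr = Sup (mx ` end_events ety tm I P)"
  unfolding MAXagg_def attr_set_eq_image end_events_eq_sinks
  using SUP_sinks[of mx "\<lambda>x. ety x = E" "\<lambda>x. ereal (attr x)"] assms
  by (simp add: greta_V_eq_vertices preds_eq_predecessors)

end

theorem theorem8:
  fixes ety :: "'e \<Rightarrow> 't" and tm :: "'e \<Rightarrow> rat" and I :: "'e set" and P :: "'t pat"
    and E :: 't and attr :: "'e \<Rightarrow> real"
    and cnt :: "'e \<Rightarrow> nat" and cntE :: "'e \<Rightarrow> nat"
    and mn :: "'e \<Rightarrow> ereal" and mx :: "'e \<Rightarrow> ereal" and sm :: "'e \<Rightarrow> real"
  assumes wf: "wf_pat P"
    and finI: "finite I"
    and time_nonneg: "\<forall>e \<in> I. tm e \<ge> 0"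
    and cnt_def: "\<forall>e \<in> greta_V ety tm I P.
        cnt e = (if ety e = pstart P then 1 else 0) + (\<Sum>p \<in> preds ety tm I P e. cnt p)"
    and recE: "\<forall>e \<in> greta_V ety tm I P. ety e = E \<longrightarrow>
        cntE e = cnt e + (\<Sum>p \<in> preds ety tm I P e. cntE p)
      \<and> mn e = Inf ({ereal (attr e)} \<union> mn ` preds ety tm I P e)
      \<and> mx e = Sup ({ereal (attr e)} \<union> mx ` preds ety tm I P e)
      \<and> sm e = attr e * real (cnt e) + (\<Sum>p \<in> preds ety tm I P e. sm p)"
    and recN: "\<forall>e \<in> greta_V ety tm I P. ety e \<noteq> E \<longrightarrow>
        cntE e = (\<Sum>p \<in> preds ety tm I P e. cntE p)
      \<and> mn e = Inf (mn ` preds ety tm I P e)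
      \<and> mx e = Sup (mx ` preds ety tm I P e)
      \<and> sm e = (\<Sum>p \<in> preds ety tm I P e. sm p)"
  shows "COUNT ety tm I P E = (\<Sum>e \<in> end_events ety tm I P. cntE e)
    \<and> MINagg ety tm I P E attr = Inf (mn ` end_events ety tm I P)
    \<and> MAXagg ety tm I P E attr = Sup (mx ` end_events ety tm I P)
    \<and> SUMagg ety tm I P E attr = (\<Sum>e \<in> end_events ety tm I P. sm e)
    \<and> AVGagg ety tm I P E attr =
        (\<Sum>e \<in> end_events ety tm I P. sm e) / real (\<Sum>e \<in> end_events ety tm I P. cntE e)"
proof -
  interpret greta_graph ety tm I P using wf finI by unfold_locales
  have "COUNT ety tm I P E = (\<Sum>e \<in> end_events ety tm I P. cntE e)"
    by (rule COUNT_eq_sum_end_events[OF cnt_def]) (use recE recN in auto)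
  moreover have "SUMagg ety tm I P E attr = (\<Sum>e \<in> end_events ety tm I P. sm e)"
    by (rule SUMagg_eq_sum_end_events[OF cnt_def]) (use recE recN in auto)
  moreover have "MINagg ety tm I P E attr = Inf (mn ` end_events ety tm I P)"
    by (rule MINagg_eq_INF_end_events) (use recE recN in auto)
  moreover have "MAXagg ety tm I P E attr = Sup (mx ` end_events ety tm I P)"
    by (rule MAXagg_eq_SUP_end_events) (use recE recN in auto)
  ultimately show ?thesis by (simp add: AVGagg_def)
qed

end
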